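(* Let $\mathcal{A},\mathcal{B}\in CP(n,m)$. Then: (1) $\hat\rho(\mathcal{A},\mathcal{B})\le\rho(\mathcal{A},\mathcal{B})$. (2) If $\mathcal{A}_1,\mathcal{B}_1\in CP(n,m)$ with $\mathcal{A}_1\preceq\mathcal{A}$ and $\mathcal{B}\preceq\mathcal{B}_1$, then $\rho(\mathcal{A}_1,\mathcal{B}_1)\le\rho(\mathcal{A},\mathcal{B})$ and $\hat\rho(\mathcal{A}_1,\mathcal{B}_1)\le\hat\rho(\mathcal{A},\mathcal{B})$. (3) There exists a weakly optimal $Y\in\mathrm{H}_{+,1,n}$. (4) If there is a weakly optimal $Y$ with $\mathcal{B}(Y)\succ0$ or $\mathcal{A}(Y)\succ0$, and $\rho(\mathcal{A},\mathcal{B})<\infty$, then $\rho(\mathcal{A},\mathcal{B})=\hat\rho(\mathcal{A},\mathcal{B})$. (5) If $\rho(\mathcal{A},\mathcal{B})<\infty$ and either $\mathcal{A}\succ0$ or $\mathcal{B}\succ0$, then $\rho(\mathcal{A},\mathcal{B})=\hat\rho(\mathcal{A},\mathcal{B})$. (6) If $\mathcal{D}_l\in CP(n,m)$ with $\mathcal{D}_l\succ0$ for $l\in\mathbb{N}$ and $\lim_{l\to\infty}\mathcal{D}_l=0$, then $\lim_{l\to\infty}\rho(\mathcal{A},\mathcal{B}+\mathcal{D}_l)=\hat\rho(\mathcal{A},\mathcal{B})$. (7) If $\mathcal{D}_l\in CP(n,m)$ with $\mathcal{D}_l\succ0$ for $l\in\mathbb{N}$, $\lim_{l\to\infty}\mathcal{D}_l=0$,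 and $\mathcal{B}(I_n)\succ0$, then $\lim_{l\to\infty}\rho(\mathcal{A}+\mathcal{D}_l,\mathcal{B})=\rho(\mathcal{A},\mathcal{B})$.
   Context: $\mathrm{H}_n$ is the real space of $n\times n$ complex Hermitian matrices, $\mathrm{H}_{+,n}$ the cone of positive semidefinite ones, $\mathrm{H}_{++,n}$ the positive definite ones, and $\mathrm{H}_{+,1,n}$ the positive semidefinite ones of trace $1$. $X\succeq Y$ ($X\succ Y$) means $X-Y$ is positive semidefinite (definite). $CP(n,m)$ is the set of completely positive maps $\mathcal{C}:\mathrm{H}_n\to\mathrm{H}_m$, i.e. maps of the form $\mathcal{C}(X)=\sum_{j=1}^kT_jXT_j^*$ with $T_j\in\mathbb{C}^{m\times n}$. For $\mathcal{C},\mathcal{D}\in CP(n,m)$, $\mathcal{C}\succeq\mathcal{D}$ (resp. $\mathcal{C}\succ\mathcal{D}$) means $\mathcal{C}(X)\succeq\mathcal{D}(X)$ (resp. $\mathcal{C}(X)\succ\mathcal{D}(X)$) for all $X\in\mathrm{H}_{+,1,n}$. For $\mathcal{A},\mathcal{B}\in CP(n,m)$ and $X\in\mathrm{H}_{+,n}\setminus\{0\}$, $r(\mathcal{A},\mathcal{B},X)=\inf\{t\ge0: t\mathcal{B}(X)-\mathcal{A}(X)\succeq0\}\in[0,\infty]$ ($\inf\emptyset=\infty$); $\rho(\mathcal{A},\mathcal{B})=\inf\{r(\mathcal{A},\mathcal{B},X):X\in\mathrm{H}_{++,n}\}$ and $\hat\rho(\mathcal{A},\mathcal{B})=\inf\{r(\mathcal{A},\mathcal{B},X):X\in\mathrm{H}_{+,n}\setminus\{0\}\}$.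 $Y\in\mathrm{H}_{+,n}\setminus\{0\}$ is weakly optimal if $r(\mathcal{A},\mathcal{B},Y)=\hat\rho(\mathcal{A},\mathcal{B})$. Convergence of maps is in any norm on linear maps $\mathrm{H}_n\to\mathrm{H}_m$. *)

theory Defs
  imports "HOL-Analysis.Analysis" "HOL-Library.Extended_Real"
begin

(* Complex matrices with rows indexed by 'm and columns by 'n: complex^'n^'m *)

definition cadj :: "complex^'n^'m \<Rightarrow> complex^'m^'n" where
  "cadj A = (\<chi> i j. cnj (A $ j $ i))"

definition hermitian :: "complex^'n^'n \<Rightarrow> bool" where
  "hermitian A \<longleftrightarrow> cadj A = A"

definition qform :: "complex^'n^'n \<Rightarrow> complex^'n \<Rightarrow> complex" where
  "qform A v = (\<Sum>i\<in>UNIV. \<Sum>j\<in>UNIV. cnj (v $ i) * A $ i $ j * v $ j)"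

definition psd :: "complex^'n^'n \<Rightarrow> bool" where
  "psd A \<longleftrightarrow> hermitian A \<and> (\<forall>v. 0 \<le> Re (qform A v))"

definition pd :: "complex^'n^'n \<Rightarrow> bool" where
  "pd A \<longleftrightarrow> hermitian A \<and> (\<forall>v. v \<noteq> 0 \<longrightarrow> 0 < Re (qform A v))"

definition mtrace :: "complex^'n^'n \<Rightarrow> complex" where
  "mtrace A = (\<Sum>i\<in>UNIV. A $ i $ i)"

definition density :: "complex^'n^'n \<Rightarrow> bool" where
  "density X \<longleftrightarrow> psd X \<and> mtrace X = 1"

definition is_CP :: "(complex^'n^'n \<Rightarrow> complex^'m^'m) \<Rightarrow> bool" where
  "is_CP C \<longleftrightarrow> (\<exists>k::nat. \<exists>T :: nat \<Rightarrow> complex^'n^'m.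
      C = (\<lambda>X. \<Sum>j<k. T j ** X ** cadj (T j)))"

definition cp_ge :: "(complex^'n^'n \<Rightarrow> complex^'m^'m) \<Rightarrow> (complex^'n^'n \<Rightarrow> complex^'m^'m) \<Rightarrow> bool" where
  "cp_ge C D \<longleftrightarrow> (\<forall>X. density X \<longrightarrow> psd (C X - D X))"

definition cp_gt :: "(complex^'n^'n \<Rightarrow> complex^'m^'m) \<Rightarrow> (complex^'n^'n \<Rightarrow> complex^'m^'m) \<Rightarrow> bool" where
  "cp_gt C D \<longleftrightarrow> (\<forall>X. density X \<longrightarrow> pd (C X - D X))"

(* r(A,B,X) = inf {t \<ge> 0 : t B(X) - A(X) \<succeq> 0} in [0,\<infinity>], inf of empty set = \<infinity> *)
definition rr :: "(complex^'n^'n \<Rightarrow> complex^'m^'m) \<Rightarrow> (complex^'n^'n \<Rightarrow> complex^'m^'m)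
                   \<Rightarrow> complex^'n^'n \<Rightarrow> ereal" where
  "rr A B X = Inf (ereal ` {t::real. 0 \<le> t \<and> psd (t *\<^sub>R B X - A X)})"

definition rho :: "(complex^'n^'n \<Rightarrow> complex^'m^'m) \<Rightarrow> (complex^'n^'n \<Rightarrow> complex^'m^'m) \<Rightarrow> ereal" where
  "rho A B = Inf {rr A B X | X. pd X}"

definition rhohat :: "(complex^'n^'n \<Rightarrow> complex^'m^'m) \<Rightarrow> (complex^'n^'n \<Rightarrow> complex^'m^'m) \<Rightarrow> ereal" where
  "rhohat A B = Inf {rr A B X | X. psd X \<and> X \<noteq> 0}"

definition weakly_optimal :: "(complex^'n^'n \<Rightarrow> complex^'m^'m) \<Rightarrow> (complex^'n^'n \<Rightarrow> complex^'m^'m)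
                   \<Rightarrow> complex^'n^'n \<Rightarrow> bool" where
  "weakly_optimal A B Y \<longleftrightarrow> psd Y \<and> Y \<noteq> 0 \<and> rr A B Y = rhohat A B"

end

(* Since r(A,B,X) is invariant under scaling X, the infimum defining \<rho>\<^sup>^ may be taken over the
   compact set of density matrices, and a minimising sequence has a limit point that is weakly
   optimal; the same compactness argument, run with the denominators B + D\<^sub>l, gives the lower
   bound in (6).  Conversely, if Y is weakly optimal and B(Y) \<succ> 0, the slack \<epsilon> B(Y) absorbs the
   error made by passing to the positive definite Y + \<delta> I, whence \<rho> \<le> \<rho>\<^sup>^ + \<epsilon>; strict positivity
   of A or B reduces (5) to this case, and a small numerator perturbation D\<^sub>l in (7) is absorbed
   in the same way by the slack of a positive definite near-optimal X. *)

theory Submission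
  imports Defs
begin

section \<open>Hermitian and positive semidefinite matrices\<close>

lemma qform_add: "qform (M + N) v = qform M v + qform N v"
  unfolding qform_def by (simp add: algebra_simps sum.distrib)

lemma qform_uminus: "qform (- M) v = - qform M v"
  unfolding qform_def by (simp add: sum_negf)

lemma qform_scaleR: "qform (c *\<^sub>R M) v = of_real c * qform M v"
  unfolding qform_def by (simp add: sum_distrib_left, simp add: scaleR_conv_of_real algebra_simps)

lemma qform_zero [simp]: "qform 0 v = 0"
  unfolding qform_def by simp

lemma qform_scaleR_vec: "qform M (c *\<^sub>R v) = of_real (c\<^sup>2) * qform M v"
  unfolding qform_def vector_scaleR_component
  by (simp add: scaleR_conv_of_real sum_distrib_left power2_eq_square mult_ac)

lemma qform_mat1: "qform (mat 1) v = of_real ((norm v)\<^sup>2)"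
proof -
  have "qform (mat 1) v = (\<Sum>i\<in>UNIV. cnj (v $ i) * v $ i)"
    unfolding qform_def mat_def
    by (simp only: vec_lambda_beta mult.right_neutral mult_zero_right mult_zero_left
        if_distrib[of "\<lambda>x. _ * x"] if_distrib[of "\<lambda>x. x * _"] sum.delta' finite UNIV_I if_True)
  also have "\<dots> = of_real (\<Sum>i\<in>UNIV. (cmod (v $ i))\<^sup>2)"
    by (simp add: of_real_sum complex_norm_square mult.commute del: of_real_power)
  also have "(\<Sum>i\<in>UNIV. (cmod (v $ i))\<^sup>2) = (norm v)\<^sup>2"
    unfolding norm_vec_def L2_set_def by (simp add: sum_nonneg)
  finally show ?thesis .
qed

lemma qform_axis: "qform M (axis i 1) = M $ i $ i"
  unfolding qform_def axis_def
  by (simp only: vec_lambda_beta mult_1_left mult_1_right mult_zero_left mult_zero_right if_distrib[of cnj]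
      complex_cnj_one complex_cnj_zero if_distrib[of "\<lambda>x. _ * x"] if_distrib[of "\<lambda>x. x * _"]
      sum.delta sum.delta' finite UNIV_I if_True)

lemma qform_axis_add_axis:
  "qform M (axis i a + axis j b) =
     cnj a * M$i$i * a + cnj a * M$i$j * b + cnj b * M$j$i * a + cnj b * M$j$j * b"
  unfolding qform_def axis_def
  apply (simp only: vector_add_component vec_lambda_beta complex_cnj_add if_distrib[of cnj] complex_cnj_zero
      distrib_left distrib_right sum.distrib)
  apply (simp only: mult_zero_left mult_zero_right if_distrib[of "\<lambda>x. x * _"]
      if_distrib[of "\<lambda>x. _ * x"] sum.delta sum.delta' finite UNIV_I if_True sum.distrib)
  apply (simp add: add_ac)
  done

lemma cadj_add: "cadj (M + N) = cadj M + cadj N"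
  unfolding cadj_def by (simp add: vec_eq_iff)

lemma cadj_diff: "cadj (M - N) = cadj M - cadj N"
  unfolding cadj_def by (simp add: vec_eq_iff)

lemma cadj_uminus: "cadj (- M) = - cadj M"
  unfolding cadj_def by (simp add: vec_eq_iff)

lemma cadj_scaleR: "cadj (c *\<^sub>R M) = c *\<^sub>R cadj M"
  unfolding cadj_def by (simp add: vec_eq_iff)

lemma cadj_zero [simp]: "cadj 0 = 0"
  unfolding cadj_def by (simp add: vec_eq_iff)

lemma cadj_cadj [simp]: "cadj (cadj M) = M"
  unfolding cadj_def by (simp add: vec_eq_iff)

lemma matrix_add_rdistrib: "(A + B) ** C = A ** C + B ** C"
  by (simp add: matrix_matrix_mult_def vec_eq_iff sum.distrib distrib_right)

lemma cadj_matrix_mult: "cadj (M ** N) = cadj N ** cadj M"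
  unfolding cadj_def matrix_matrix_mult_def by (simp add: vec_eq_iff mult.commute)

lemma hermitian_iff_entries: "hermitian X \<longleftrightarrow> (\<forall>i j. X $ i $ j = cnj (X $ j $ i))"
  unfolding hermitian_def cadj_def vec_eq_iff by (auto simp: eq_commute)

lemma hermitian_add: "hermitian M \<Longrightarrow> hermitian N \<Longrightarrow> hermitian (M + N)"
  unfolding hermitian_def by (simp add: cadj_add)

lemma hermitian_diff: "hermitian M \<Longrightarrow> hermitian N \<Longrightarrow> hermitian (M - N)"
  unfolding hermitian_def by (simp add: cadj_diff)

lemma hermitian_uminus: "hermitian M \<Longrightarrow> hermitian (- M)"
  unfolding hermitian_def by (simp add: cadj_uminus)

lemma hermitian_scaleR: "hermitian M \<Longrightarrow> hermitian (c *\<^sub>R M)"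
  unfolding hermitian_def by (simp add: cadj_scaleR)

lemma hermitian_mat1: "hermitian (mat 1)"
  unfolding hermitian_iff_entries mat_def by simp

lemma psd_hermitian: "psd M \<Longrightarrow> hermitian M"
  unfolding psd_def by simp

lemma psd_add: "psd M \<Longrightarrow> psd N \<Longrightarrow> psd (M + N)"
  unfolding psd_def by (simp add: hermitian_add qform_add)

lemma psd_scaleR: "psd M \<Longrightarrow> 0 \<le> c \<Longrightarrow> psd (c *\<^sub>R M)"
  unfolding psd_def by (simp add: hermitian_scaleR qform_scaleR)

lemma psd_scaleR_iff: "0 < c \<Longrightarrow> psd (c *\<^sub>R M) \<longleftrightarrow> psd M"
  using psd_scaleR[of "c *\<^sub>R M" "inverse c"] psd_scaleR[of M c] by auto

lemma psd_zero [simp]: "psd 0"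
  unfolding psd_def hermitian_def by simp

lemma psd_sum: "(\<And>j. j \<in> S \<Longrightarrow> psd (f j)) \<Longrightarrow> psd (sum f S)"
  by (induction S rule: infinite_finite_induct) (auto intro: psd_add)

lemma psd_mat1: "psd (mat 1)"
  unfolding psd_def by (simp add: hermitian_mat1 qform_mat1)

lemma qform_zero_vec [simp]: "qform M 0 = 0"
  unfolding qform_def by simp

lemma pd_imp_psd: "pd M \<Longrightarrow> psd M"
  unfolding pd_def psd_def by (metis order.refl less_imp_le qform_zero_vec zero_complex.sel(1))

lemma pd_add_psd: "pd M \<Longrightarrow> psd N \<Longrightarrow> pd (M + N)"
  unfolding psd_def pd_def by (simp add: hermitian_add qform_add add_pos_nonneg)

lemma pd_scaleR: "pd M \<Longrightarrow> 0 < c \<Longrightarrow> pd (c *\<^sub>R M)"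
  unfolding pd_def by (simp add: hermitian_scaleR qform_scaleR)

lemma pd_mat1: "pd (mat 1)"
  unfolding pd_def by (simp add: hermitian_mat1 qform_mat1)

lemma exists_nonzero_vec: "\<exists>v::'a::zero_neq_one^'n. v \<noteq> 0"
  by (metis axis_eq_0_iff zero_neq_one)

lemma pd_nonzero: "pd X \<Longrightarrow> X \<noteq> 0"
  unfolding pd_def using exists_nonzero_vec by fastforce

lemma not_psd_uminus_pd:
  fixes M :: "complex^'n^'n"
  assumes "pd M" shows "\<not> psd (- M)"
proof -
  obtain v :: "complex^'n" where "v \<noteq> 0" using exists_nonzero_vec by blast
  then have "0 < Re (qform M v)" using assms unfolding pd_def by blast
  then show ?thesis unfolding psd_def qform_uminus by (metis uminus_complex.sel(1) neg_0_le_iff_le not_le)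
qed

lemma qform_conj: "qform (T ** X ** cadj T) v = qform X (cadj T *v v)"
proof -
  have "qform (T ** X ** cadj T) v =
     (\<Sum>i\<in>UNIV. \<Sum>j\<in>UNIV. \<Sum>l\<in>UNIV. \<Sum>k\<in>UNIV. cnj (v$i) * T$i$k * X$k$l * cnj (T$j$l) * v$j)"
    unfolding qform_def matrix_matrix_mult_def cadj_def
    by (simp add: sum_distrib_left sum_distrib_right mult_ac)
  also have "\<dots> = (\<Sum>k\<in>UNIV. \<Sum>l\<in>UNIV. \<Sum>i\<in>UNIV. \<Sum>j\<in>UNIV. cnj (v$i) * T$i$k * X$k$l * cnj (T$j$l) * v$j)"
  proof -
    have "(\<Sum>i\<in>UNIV. \<Sum>j\<in>UNIV. \<Sum>l\<in>UNIV. \<Sum>k\<in>UNIV. cnj (v$i) * T$i$k * X$k$l * cnj (T$j$l) * v$j)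
      = (\<Sum>i\<in>UNIV. \<Sum>k\<in>UNIV. \<Sum>l\<in>UNIV. \<Sum>j\<in>UNIV. cnj (v$i) * T$i$k * X$k$l * cnj (T$j$l) * v$j)"
      by (rule sum.cong[OF refl], subst sum.swap, rule trans[OF sum.swap],
          rule sum.cong[OF refl], rule sum.swap)
    also have "\<dots> = (\<Sum>k\<in>UNIV. \<Sum>i\<in>UNIV. \<Sum>l\<in>UNIV. \<Sum>j\<in>UNIV. cnj (v$i) * T$i$k * X$k$l * cnj (T$j$l) * v$j)"
      by (rule sum.swap)
    also have "\<dots> = (\<Sum>k\<in>UNIV. \<Sum>l\<in>UNIV. \<Sum>i\<in>UNIV. \<Sum>j\<in>UNIV. cnj (v$i) * T$i$k * X$k$l * cnj (T$j$l) * v$j)"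
      by (rule sum.cong[OF refl], rule sum.swap)
    finally show ?thesis .
  qed
  also have "\<dots> = qform X (cadj T *v v)"
    unfolding qform_def matrix_vector_mult_def cadj_def
    by (simp add: sum_distrib_left sum_distrib_right mult_ac cnj_sum)
  finally show ?thesis .
qed

lemma psd_conj: "psd X \<Longrightarrow> psd (T ** X ** cadj T)"
  unfolding psd_def hermitian_def by (simp add: qform_conj cadj_matrix_mult matrix_mul_assoc)

lemma psd_diag:
  assumes "psd X" shows "Im (X$i$i) = 0" "0 \<le> Re (X$i$i)"
proof -
  have "X$i$i = cnj (X$i$i)" using assms unfolding psd_def hermitian_iff_entries by blast
  then show "Im (X$i$i) = 0" by (metis Reals_cnj_iff complex_is_Real_iff)
  show "0 \<le> Re (X$i$i)" using assms unfolding psd_def by (metis qform_axis)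
qed

lemma psd_offdiag_le:
  assumes "psd X" shows "2 * cmod (X$i$j) \<le> Re (X$i$i) + Re (X$j$j)"
proof (cases "X$i$j = 0")
  case True then show ?thesis using psd_diag[OF assms] by simp
next
  case False
  define r where "r = cmod (X$i$j)"
  have r: "r > 0" using False unfolding r_def by simp
  \<comment> \<open>test the form on \<open>e\<^sub>i + b e\<^sub>j\<close> with the phase of \<open>b\<close> opposite to that of \<open>X\<^sub>i\<^sub>j\<close>\<close>
  define b where "b = - cnj (X$i$j) / of_real r"
  have sq: "X$i$j * cnj (X$i$j) = of_real (r\<^sup>2)"
    unfolding r_def by (metis complex_norm_square of_real_power)
  have "X$j$i = cnj (X$i$j)" using assms unfolding psd_def hermitian_iff_entries by blast
  then have "qform X (axis i 1 + axis j b) = X$i$i - 2 * of_real r + X$j$j"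
    unfolding qform_axis_add_axis b_def using r sq
    by (simp add: power2_eq_square field_simps mult.commute[of "cnj _"])
  moreover have "0 \<le> Re (qform X (axis i 1 + axis j b))"
    using assms unfolding psd_def by blast
  ultimately show ?thesis unfolding r_def by simp
qed

lemma mtrace_scaleR: "mtrace (c *\<^sub>R X) = c *\<^sub>R mtrace X"
  unfolding mtrace_def by (simp add: scaleR_sum_right)

lemma mtrace_psd_real: "psd X \<Longrightarrow> mtrace X = of_real (Re (mtrace X))"
  unfolding mtrace_def by (simp add: complex_eq_iff Im_sum psd_diag(1))

lemma mtrace_psd_pos:
  assumes "psd X" "X \<noteq> 0" shows "0 < Re (mtrace X)"
proof (rule ccontr)
  assume "\<not> 0 < Re (mtrace X)"
  then have "(\<Sum>i\<in>UNIV. Re (X$i$i)) \<le> 0" unfolding mtrace_def by (simp add: Re_sum)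
  then have "Re (X$i$i) = 0" for i
    using sum_nonneg_eq_0_iff[of UNIV "\<lambda>i. Re (X$i$i)"] psd_diag(2)[OF assms(1)]
    by (simp add: order_antisym sum_nonneg)
  then have "X$i$j = 0" for i j using psd_offdiag_le[OF assms(1), of i j] by simp
  then show False using assms(2) by (simp add: vec_eq_iff)
qed

lemma psd_eq_scaleR_density:
  assumes "psd X" "X \<noteq> 0"
  obtains c Y where "0 < c" "density Y" "X = c *\<^sub>R Y"
proof -
  define c where "c = Re (mtrace X)"
  have "0 < c" unfolding c_def by (rule mtrace_psd_pos[OF assms])
  moreover have "mtrace X = of_real c" unfolding c_def by (rule mtrace_psd_real[OF assms(1)])
  then have "mtrace (inverse c *\<^sub>R X) = 1"
    unfolding mtrace_scaleR using \<open>0 < c\<close> by (simp add: scaleR_conv_of_real)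
  then have "density (inverse c *\<^sub>R X)"
    unfolding density_def using \<open>0 < c\<close> assms(1) by (simp add: psd_scaleR)
  moreover have "X = c *\<^sub>R (inverse c *\<^sub>R X)" using \<open>0 < c\<close> by simp
  ultimately show ?thesis using that by blast
qed

lemma density_nonzero: "density X \<Longrightarrow> X \<noteq> 0"
  unfolding density_def mtrace_def by auto

lemma density_entry_le_1:
  assumes "density X" shows "cmod (X$i$j) \<le> 1"
proof -
  have psd: "psd X" using assms unfolding density_def by simp
  have "(\<Sum>k\<in>UNIV. Re (X$k$k)) = 1"
    using assms unfolding density_def mtrace_def by (metis Re_sum one_complex.simps(1))
  then have "Re (X$k$k) \<le> 1" for k
    using member_le_sum[of k UNIV "\<lambda>k. Re (X$k$k)"] psd_diag(2)[OF psd] by simp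
  then show ?thesis using psd_offdiag_le[OF psd, of i j] by (smt (verit))
qed

lemma norm_density_le:
  fixes X :: "complex^'n^'n"
  assumes "density X" shows "norm X \<le> real CARD('n) * real CARD('n)"
proof -
  have "norm X \<le> (\<Sum>i\<in>UNIV. norm (X $ i))"
    unfolding norm_vec_def by (rule L2_set_le_sum) simp
  also have "\<dots> \<le> (\<Sum>i\<in>UNIV. \<Sum>j\<in>UNIV. cmod (X $ i $ j))"
    by (intro sum_mono) (simp add: norm_vec_def L2_set_le_sum)
  also have "\<dots> \<le> (\<Sum>i\<in>(UNIV::'n set). \<Sum>j\<in>(UNIV::'n set). 1)"
    by (intro sum_mono density_entry_le_1[OF assms])
  finally show ?thesis by simp
qed

lemma closed_psd: "closed {X :: complex^'n^'n. psd X}"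
proof -
  have "{X :: complex^'n^'n. psd X} =
      (\<Inter>i. \<Inter>j. {X. X $ i $ j = cnj (X $ j $ i)}) \<inter> (\<Inter>v. {X. 0 \<le> Re (qform X v)})"
    unfolding psd_def hermitian_iff_entries by auto
  moreover have "closed {X :: complex^'n^'n. X $ i $ j = cnj (X $ j $ i)}" for i j
    by (intro closed_Collect_eq continuous_intros)
  moreover have "closed {X :: complex^'n^'n. 0 \<le> Re (qform X v)}" for v
    unfolding qform_def by (intro closed_Collect_le continuous_intros)
  ultimately show ?thesis by (auto intro!: closed_Int closed_INT)
qed

lemma psd_limit: "(\<And>k. psd (M k)) \<Longrightarrow> M \<longlonglongrightarrow> L \<Longrightarrow> psd L"
  using closed_sequentially[OF closed_psd, of M L] by blast

lemma compact_density: "compact {X :: complex^'n^'n. density X}"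
  unfolding compact_eq_bounded_closed
proof
  show "bounded {X :: complex^'n^'n. density X}"
    unfolding bounded_iff using norm_density_le by blast
  have "closed {X :: complex^'n^'n. mtrace X = 1}"
    unfolding mtrace_def by (intro closed_Collect_eq continuous_intros)
  then show "closed {X :: complex^'n^'n. density X}"
    unfolding density_def Collect_conj_eq by (intro closed_Int closed_psd)
qed

section \<open>Perturbations of positive definite matrices\<close>

lemma norm_qform_le:
  fixes M :: "complex^'n^'n"
  shows "cmod (qform M v) \<le> real CARD('n) * real CARD('n) * norm M * (norm v)\<^sup>2"
proof -
  have "cmod (qform M v) \<le> (\<Sum>i\<in>UNIV. \<Sum>j\<in>UNIV. cmod (cnj (v $ i) * M $ i $ j * v $ j))"
    unfolding qform_def by (rule order_trans[OF norm_sum sum_mono[OF norm_sum]])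
  also have "\<dots> \<le> (\<Sum>i\<in>(UNIV::'n set). \<Sum>j\<in>(UNIV::'n set). norm M * (norm v)\<^sup>2)"
  proof (intro sum_mono)
    fix i j
    have "cmod (M $ i $ j) \<le> norm M"
      by (rule order_trans[OF Finite_Cartesian_Product.norm_nth_le Finite_Cartesian_Product.norm_nth_le])
    then have "cmod (v $ i) * cmod (M $ i $ j) * cmod (v $ j) \<le> norm v * norm M * norm v"
      by (intro mult_mono) (auto simp: Finite_Cartesian_Product.norm_nth_le)
    then show "cmod (cnj (v $ i) * M $ i $ j * v $ j) \<le> norm M * (norm v)\<^sup>2"
      by (simp add: norm_mult power2_eq_square mult_ac)
  qed
  finally show ?thesis by (simp add: mult_ac)
qed

lemma pd_qform_ge:
  fixes P :: "complex^'n^'n"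
  assumes "pd P"
  obtains l where "0 < l" "\<And>v. l * (norm v)\<^sup>2 \<le> Re (qform P v)"
proof -
  have cont: "continuous_on (sphere 0 1) (\<lambda>v. Re (qform P v))"
    unfolding qform_def by (intro continuous_intros)
  obtain w :: "complex^'n" where "w \<noteq> 0" using exists_nonzero_vec by blast
  then have "sgn w \<in> sphere 0 1" by (simp add: norm_sgn)
  then obtain u where u: "u \<in> sphere 0 1" "\<And>y. y \<in> sphere 0 1 \<Longrightarrow> Re (qform P u) \<le> Re (qform P y)"
    using continuous_attains_inf[OF compact_sphere _ cont] by blast
  show ?thesis
  proof
    have "u \<noteq> 0" using u(1) by auto
    then show "0 < Re (qform P u)" using assms unfolding pd_def by blast
    fix v :: "complex^'n"
    show "Re (qform P u) * (norm v)\<^sup>2 \<le> Re (qform P v)"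
    proof (cases "v = 0")
      case False
      have "v = norm v *\<^sub>R sgn v" using False by (simp add: sgn_div_norm)
      then have "qform P v = of_real ((norm v)\<^sup>2) * qform P (sgn v)"
        by (metis qform_scaleR_vec)
      then have "Re (qform P v) = (norm v)\<^sup>2 * Re (qform P (sgn v))" by simp
      moreover have "Re (qform P u) \<le> Re (qform P (sgn v))" using False by (intro u(2)) (simp add: norm_sgn)
      ultimately show ?thesis by (simp add: mult.commute mult_right_mono)
    qed simp
  qed
qed

lemma pd_add_small_psd:
  fixes P :: "complex^'n^'n"
  assumes "pd P"
  obtains e where "0 < e" "\<And>M. hermitian M \<Longrightarrow> norm M \<le> e \<Longrightarrow> psd (P + M)"
proof -
  obtain l where l: "0 < l" "\<And>v. l * (norm v)\<^sup>2 \<le> Re (qform P v)"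
    using pd_qform_ge[OF assms] by blast
  define K where "K = real CARD('n) * real CARD('n)"
  have K: "0 < K" unfolding K_def by simp
  show ?thesis
  proof
    show "0 < l / K" using l(1) K by simp
    fix M :: "complex^'n^'n" assume M: "hermitian M" "norm M \<le> l / K"
    have "0 \<le> Re (qform (P + M) v)" for v
    proof -
      have "- Re (qform M v) \<le> K * norm M * (norm v)\<^sup>2"
        using norm_qform_le[of M v] abs_Re_le_cmod[of "qform M v"] unfolding K_def by linarith
      also have "\<dots> \<le> l * (norm v)\<^sup>2"
        using M(2) K by (intro mult_right_mono) (simp_all add: pos_le_divide_eq mult.commute)
      finally show ?thesis using l(2)[of v] by (simp add: qform_add)
    qed
    then show "psd (P + M)"
      using assms M(1) unfolding pd_def psd_def by (simp add: hermitian_add)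
  qed
qed

lemma pd_add_scaleR_psd:
  fixes P :: "complex^'n^'n"
  assumes "pd P" "hermitian M"
  obtains \<epsilon> where "0 < \<epsilon>" "psd (P + \<epsilon> *\<^sub>R M)"
proof -
  obtain e where e: "0 < e" "\<And>N. hermitian N \<Longrightarrow> norm N \<le> e \<Longrightarrow> psd (P + N)"
    using pd_add_small_psd[OF assms(1)] by blast
  define \<epsilon> where "\<epsilon> = e / (norm M + 1)"
  have "0 < \<epsilon>" unfolding \<epsilon>_def using e(1) by (simp add: add_nonneg_pos)
  have "norm (\<epsilon> *\<^sub>R M) \<le> \<epsilon> * (norm M + 1)"
    using \<open>0 < \<epsilon>\<close> by simp
  also have "\<dots> = e"
    unfolding \<epsilon>_def using add_nonneg_pos[OF norm_ge_zero zero_less_one, of M] by simp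
  finally have "psd (P + \<epsilon> *\<^sub>R M)" by (rule e(2)[OF hermitian_scaleR[OF assms(2)]])
  with \<open>0 < \<epsilon>\<close> show ?thesis using that by blast
qed

section \<open>Positive maps\<close>

definition positive_map :: "(complex^'n^'n \<Rightarrow> complex^'m^'m) \<Rightarrow> bool" where
  "positive_map C \<longleftrightarrow> linear C \<and> (\<forall>X. psd X \<longrightarrow> psd (C X))"

lemma positive_map_linear: "positive_map C \<Longrightarrow> linear C"
  unfolding positive_map_def by simp

lemma positive_map_psd: "positive_map C \<Longrightarrow> psd X \<Longrightarrow> psd (C X)"
  unfolding positive_map_def by simp

lemma is_CP_positive_map:
  fixes C :: "complex^'n^'n \<Rightarrow> complex^'m^'m"
  assumes "is_CP C" shows "positive_map C"
proof -
  obtain k and T :: "nat \<Rightarrow> complex^'n^'m" where C: "C = (\<lambda>X. \<Sum>j<k. T j ** X ** cadj (T j))"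
    using assms unfolding is_CP_def by blast
  have "linear C"
    unfolding C
    by (rule linearI) (simp_all add: matrix_add_ldistrib matrix_add_rdistrib sum.distrib
        scalar_matrix_assoc matrix_scalar_ac scaleR_sum_right)
  moreover have "psd (C X)" if "psd X" for X
    unfolding C by (intro psd_sum psd_conj that)
  ultimately show ?thesis unfolding positive_map_def by blast
qed

lemma positive_map_bounded_linear: "positive_map C \<Longrightarrow> bounded_linear C"
  using positive_map_linear linear_conv_bounded_linear by blast

lemma positive_map_zero: "positive_map (\<lambda>_. 0)"
  unfolding positive_map_def by (simp add: linear_zero)

lemma positive_map_add: "positive_map C \<Longrightarrow> positive_map D \<Longrightarrow> positive_map (\<lambda>X. C X + D X)"
  unfolding positive_map_def by (auto intro: linear_compose_add psd_add)

lemma cp_ge_refl: "cp_ge C C"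
  unfolding cp_ge_def by simp

lemma cp_ge_add_right: "positive_map D \<Longrightarrow> cp_ge (\<lambda>X. C X + D X) C"
  unfolding cp_ge_def density_def by (simp add: positive_map_psd)

lemma cp_gt_add_left: "positive_map C \<Longrightarrow> cp_gt D (\<lambda>_. 0) \<Longrightarrow> cp_gt (\<lambda>X. C X + D X) (\<lambda>_. 0)"
  unfolding cp_gt_def density_def by (metis add.commute diff_zero pd_add_psd positive_map_psd)

text \<open>The relations \<open>\<succeq>\<close> and \<open>\<succ>\<close> are tested on density matrices only; by homogeneity
  they extend to the whole cone.\<close>

lemma cp_ge_psd:
  assumes "cp_ge C D" "linear C" "linear D" "psd X"
  shows "psd (C X - D X)"
proof (cases "X = 0")
  case False
  then obtain c Y where "0 < c" "density Y" "X = c *\<^sub>R Y"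
    using psd_eq_scaleR_density[OF assms(4)] by blast
  moreover have "C X - D X = c *\<^sub>R (C Y - D Y)"
    using \<open>X = c *\<^sub>R Y\<close> assms(2,3) by (simp add: linear_scale scaleR_diff_right)
  ultimately show ?thesis using assms(1) unfolding cp_ge_def by (simp add: psd_scaleR)
qed (simp add: assms(2,3) linear_0)

lemma cp_gt_zero_pd:
  assumes "cp_gt C (\<lambda>_. 0)" "linear C" "psd X" "X \<noteq> 0"
  shows "pd (C X)"
proof -
  obtain c Y where "0 < c" "density Y" "X = c *\<^sub>R Y"
    using psd_eq_scaleR_density[OF assms(3,4)] by blast
  then show ?thesis using assms(1,2) unfolding cp_gt_def by (simp add: linear_scale pd_scaleR)
qed

lemma pd_apply_of_pd_mat1:
  assumes "positive_map C" "pd (C (mat 1))" "pd X"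
  shows "pd (C X)"
proof -
  obtain \<epsilon> where "0 < \<epsilon>" "psd (X + \<epsilon> *\<^sub>R (- mat 1))"
    using pd_add_scaleR_psd[OF assms(3) hermitian_uminus[OF hermitian_mat1]] by blast
  then have "pd (\<epsilon> *\<^sub>R C (mat 1) + C (X + \<epsilon> *\<^sub>R (- mat 1)))"
    by (intro pd_add_psd pd_scaleR assms(2) positive_map_psd[OF assms(1)])
  moreover have "\<epsilon> *\<^sub>R C (mat 1) + C (X + \<epsilon> *\<^sub>R (- mat 1)) = C X"
    using positive_map_linear[OF assms(1)] by (simp add: linear_diff linear_scale)
  ultimately show ?thesis by simp
qed

lemma tendsto_apply_bounded_zero:
  fixes f :: "nat \<Rightarrow> 'a::real_normed_vector \<Rightarrow> 'b::real_normed_vector"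
  assumes "\<And>k. bounded_linear (f k)" "(\<lambda>k. Blinfun (f k)) \<longlonglongrightarrow> 0" "\<And>k. norm (x k) \<le> K"
  shows "(\<lambda>k. f k (x k)) \<longlonglongrightarrow> 0"
proof -
  have "Zfun (\<lambda>k. blinfun_apply (Blinfun (f k)) (x k)) sequentially"
    using assms(2,3)
    by (intro bounded_bilinear.Zfun_prod_Bfun[OF bounded_bilinear_blinfun_apply] BfunI[where K = K])
      (simp_all add: tendsto_Zfun_iff)
  then show ?thesis by (simp add: tendsto_Zfun_iff bounded_linear_Blinfun_apply[OF assms(1)])
qed

section \<open>The ratios \<open>r\<close>, \<open>\<rho>\<close> and \<open>\<rho>\<^sup>^\<close>\<close>

lemma rr_nonneg: "0 \<le> rr A B X"
  unfolding rr_def by (rule Inf_greatest) auto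

lemma rr_le_ereal: "0 \<le> t \<Longrightarrow> psd (t *\<^sub>R B X - A X) \<Longrightarrow> rr A B X \<le> ereal t"
  unfolding rr_def by (rule Inf_lower) auto

text \<open>The infimum defining \<open>r\<close> is attained: the admissible \<open>t\<close> form a closed
  up-set as soon as \<open>B(X) \<succeq> 0\<close>.\<close>

lemma rr_le_ereal_iff:
  assumes "psd (B X)" "0 \<le> s"
  shows "rr A B X \<le> ereal s \<longleftrightarrow> psd (s *\<^sub>R B X - A X)"
proof
  assume le: "rr A B X \<le> ereal s"
  have "psd ((s + inverse (real (Suc k))) *\<^sub>R B X - A X)" for k
  proof -
    have "rr A B X < ereal (s + inverse (real (Suc k)))"
      using le by (rule le_less_trans) simp
    then obtain t where "0 \<le> t" "t < s + inverse (real (Suc k))" "psd (t *\<^sub>R B X - A X)"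
      unfolding rr_def by (auto simp: Inf_less_iff)
    then have "psd ((t *\<^sub>R B X - A X) + (s + inverse (real (Suc k)) - t) *\<^sub>R B X)"
      by (intro psd_add psd_scaleR assms(1)) auto
    then show ?thesis by (simp add: algebra_simps)
  qed
  moreover have "(\<lambda>k. (s + inverse (real (Suc k))) *\<^sub>R B X - A X) \<longlonglongrightarrow> s *\<^sub>R B X - A X"
    by (intro tendsto_intros LIMSEQ_inverse_real_of_nat_add)
  ultimately show "psd (s *\<^sub>R B X - A X)" by (rule psd_limit)
qed (rule rr_le_ereal[OF assms(2)])

lemma rr_scaleR:
  assumes "linear A" "linear B" "0 < c"
  shows "rr A B (c *\<^sub>R X) = rr A B X"
proof -
  have "t *\<^sub>R B (c *\<^sub>R X) - A (c *\<^sub>R X) = c *\<^sub>R (t *\<^sub>R B X - A X)" for t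
    using assms(1,2) by (simp add: linear_scale algebra_simps)
  then show ?thesis unfolding rr_def by (simp add: psd_scaleR_iff[OF assms(3)])
qed

lemma rho_le_rr: "pd X \<Longrightarrow> rho A B \<le> rr A B X"
  unfolding rho_def by (rule Inf_lower) auto

lemma rhohat_le_rr: "psd X \<Longrightarrow> X \<noteq> 0 \<Longrightarrow> rhohat A B \<le> rr A B X"
  unfolding rhohat_def by (rule Inf_lower) auto

lemma rhohat_le_rr_density: "density X \<Longrightarrow> rhohat A B \<le> rr A B X"
  by (simp add: rhohat_le_rr density_nonzero density_def)

lemma rho_lessE:
  assumes "rho A B < a"
  obtains X where "pd X" "rr A B X < a"
  using assms unfolding rho_def by (auto simp: Inf_less_iff)

lemma rhohat_less_density:
  assumes "linear A" "linear B" "rhohat A B < a"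
  obtains X where "density X" "rr A B X < a"
proof -
  obtain X where X: "psd X" "X \<noteq> 0" "rr A B X < a"
    using assms(3) unfolding rhohat_def by (auto simp: Inf_less_iff)
  then obtain c Y where "0 < c" "density Y" "X = c *\<^sub>R Y"
    using psd_eq_scaleR_density by blast
  then show ?thesis using that X(3) rr_scaleR[OF assms(1,2)] by metis
qed

lemma rho_nonneg: "0 \<le> rho A B"
  unfolding rho_def by (rule Inf_greatest) (auto simp: rr_nonneg)

lemma rhohat_nonneg: "0 \<le> rhohat A B"
  unfolding rhohat_def by (rule Inf_greatest) (auto simp: rr_nonneg)

lemma rhohat_le_rho: "rhohat A B \<le> rho A B"
  unfolding rho_def rhohat_def by (rule Inf_superset_mono) (blast dest: pd_imp_psd pd_nonzero)

lemma rr_mono: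
  assumes "linear A" "linear A1" "linear B" "linear B1" "cp_ge A A1" "cp_ge B1 B" "psd X"
  shows "rr A1 B1 X \<le> rr A B X"
proof -
  have "psd (t *\<^sub>R B1 X - A1 X)" if "0 \<le> t" "psd (t *\<^sub>R B X - A X)" for t
  proof -
    have "psd ((t *\<^sub>R B X - A X) + t *\<^sub>R (B1 X - B X) + (A X - A1 X))"
      using that cp_ge_psd[OF assms(6,4,3,7)] cp_ge_psd[OF assms(5,1,2,7)]
      by (intro psd_add psd_scaleR)
    then show ?thesis by (simp add: algebra_simps)
  qed
  then show ?thesis unfolding rr_def by (intro Inf_superset_mono image_mono) auto
qed

lemma rho_rhohat_mono:
  assumes "linear A" "linear A1" "linear B" "linear B1" "cp_ge A A1" "cp_ge B1 B"
  shows "rho A1 B1 \<le> rho A B" "rhohat A1 B1 \<le> rhohat A B"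
  unfolding rho_def rhohat_def
  by (auto intro!: Inf_mono rr_mono[OF assms] pd_imp_psd)

section \<open>Weakly optimal matrices and the equality \<open>\<rho> = \<rho>\<^sup>^\<close>\<close>

lemma rhohat_less_density_psd:
  assumes A: "positive_map A" and B: "positive_map B" and less: "rhohat A B < ereal s"
    and "0 \<le> s"
  obtains X where "density X" "psd (s *\<^sub>R B X - A X)"
proof -
  obtain X where X: "density X" "rr A B X < ereal s"
    by (rule rhohat_less_density[OF positive_map_linear[OF A] positive_map_linear[OF B] less])
  have "psd (B X)" using X(1) positive_map_psd[OF B] unfolding density_def by simp
  then have "psd (s *\<^sub>R B X - A X)"
    using rr_le_ereal_iff[where A = A and B = B and X = X] less_imp_le[OF X(2)] \<open>0 \<le> s\<close> by blast
  with X(1) show ?thesis by (rule that)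
qed

text \<open>Compactness of the density matrices: a bound on \<open>\<rho>\<^sup>^\<close> that holds for arbitrarily
  small positive perturbations of the denominator is attained by a single density matrix.\<close>

lemma density_rr_le_of_perturbed:
  fixes A B :: "complex^'n^'n \<Rightarrow> complex^'m^'m" and E :: "nat \<Rightarrow> complex^'n^'n \<Rightarrow> complex^'m^'m"
  assumes A: "positive_map A" and B: "positive_map B" and E: "\<And>k. positive_map (E k)"
    and E0: "(\<lambda>k. Blinfun (E k)) \<longlonglongrightarrow> 0"
    and le: "\<And>k. rhohat A (\<lambda>X. B X + E k X) \<le> ereal c"
  obtains Y where "density Y" "rr A B Y \<le> ereal c"
proof -
  define s where "s k = c + inverse (real (Suc k))" for k
  have "0 \<le> c" using order_trans[OF rhohat_nonneg le[of 0]] by simp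
  have "\<forall>k. \<exists>X. density X \<and> psd (s k *\<^sub>R (B X + E k X) - A X)"
  proof
    fix k
    have "rhohat A (\<lambda>X. B X + E k X) < ereal (s k)"
      using le[of k] unfolding s_def by (rule le_less_trans) simp
    moreover have "0 \<le> s k" unfolding s_def using \<open>0 \<le> c\<close> by simp
    ultimately show "\<exists>X. density X \<and> psd (s k *\<^sub>R (B X + E k X) - A X)"
      by (rule rhohat_less_density_psd[OF A positive_map_add[OF B E]]) blast
  qed
  then obtain X where "\<forall>k. density (X k) \<and> psd (s k *\<^sub>R (B (X k) + E k (X k)) - A (X k))"
    by (rule choice[THEN exE])
  then have X: "\<And>k. density (X k)" "\<And>k. psd (s k *\<^sub>R (B (X k) + E k (X k)) - A (X k))"
    by simp_all
  obtain Y \<sigma> where Y: "density Y" "strict_mono \<sigma>" "(X \<circ> \<sigma>) \<longlonglongrightarrow> Y"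
  proof (rule seq_compactE[OF compact_imp_seq_compact[OF compact_density]])
    show "\<forall>k. X k \<in> {X. density X}" using X(1) by simp
  qed (simp add: that)
  have E_lim: "(\<lambda>k. E (\<sigma> k) (X (\<sigma> k))) \<longlonglongrightarrow> 0"
  proof (rule tendsto_apply_bounded_zero[where f = "\<lambda>k. E (\<sigma> k)" and x = "\<lambda>k. X (\<sigma> k)"
        and K = "real CARD('n) * real CARD('n)"])
    show "(\<lambda>k. Blinfun (E (\<sigma> k))) \<longlonglongrightarrow> 0"
      using LIMSEQ_subseq_LIMSEQ[OF E0 Y(2)] by (simp add: o_def)
  qed (simp_all add: positive_map_bounded_linear E norm_density_le X(1))
  have s_lim: "(\<lambda>k. s (\<sigma> k)) \<longlonglongrightarrow> c"
    using LIMSEQ_subseq_LIMSEQ[OF LIMSEQ_inverse_real_of_nat_add Y(2)] unfolding s_def o_def .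
  have X_lim: "(\<lambda>k. X (\<sigma> k)) \<longlonglongrightarrow> Y" using Y(3) by (simp add: o_def)
  have A_lim: "(\<lambda>k. A (X (\<sigma> k))) \<longlonglongrightarrow> A Y"
    by (rule bounded_linear.tendsto[OF positive_map_bounded_linear[OF A] X_lim])
  have B_lim: "(\<lambda>k. B (X (\<sigma> k))) \<longlonglongrightarrow> B Y"
    by (rule bounded_linear.tendsto[OF positive_map_bounded_linear[OF B] X_lim])
  have "(\<lambda>k. s (\<sigma> k) *\<^sub>R (B (X (\<sigma> k)) + E (\<sigma> k) (X (\<sigma> k))) - A (X (\<sigma> k)))
      \<longlonglongrightarrow> c *\<^sub>R (B Y + 0) - A Y"
    by (rule tendsto_diff[OF tendsto_scaleR[OF s_lim tendsto_add[OF B_lim E_lim]] A_lim])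
  then have "psd (c *\<^sub>R B Y - A Y)" using psd_limit X(2) by fastforce
  then have "rr A B Y \<le> ereal c" by (rule rr_le_ereal[OF \<open>0 \<le> c\<close>])
  with Y(1) show ?thesis by (rule that)
qed

lemma weakly_optimal_density:
  assumes "density Y" "rr A B Y \<le> rhohat A B"
  shows "weakly_optimal A B Y"
  using assms rhohat_le_rr_density[OF assms(1), of A B] density_nonzero[OF assms(1)]
  unfolding weakly_optimal_def density_def by (simp add: order_antisym)

lemma weakly_optimal_density_exists:
  fixes A B :: "complex^'n^'n \<Rightarrow> complex^'m^'m"
  assumes A: "positive_map A" and B: "positive_map B"
  shows "\<exists>Y. density Y \<and> weakly_optimal A B Y"
proof (cases "rhohat A B")
  case (real \<rho>)
  have "(\<lambda>k. Blinfun (\<lambda>_. 0)) \<longlonglongrightarrow> 0" by (simp add: zero_blinfun.abs_eq)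
  then obtain Y where Y: "density Y" "rr A B Y \<le> ereal \<rho>"
    by (rule density_rr_le_of_perturbed[where c = \<rho>, OF A B positive_map_zero])
      (simp_all add: real)
  then have "weakly_optimal A B Y" using real by (intro weakly_optimal_density) auto
  with Y(1) show ?thesis by blast
next
  case PInf
  obtain c and Y :: "complex^'n^'n" where "density Y"
    using psd_eq_scaleR_density[OF psd_mat1 pd_nonzero[OF pd_mat1]] by blast
  moreover have "weakly_optimal A B Y"
    using PInf \<open>density Y\<close> by (intro weakly_optimal_density) auto
  ultimately show ?thesis by blast
qed (use rhohat_nonneg[of A B] in simp)

lemma rr_finite_pd_imp_pd:
  assumes "positive_map B" "psd Y" "rr A B Y < \<infinity>" "pd (A Y)"
  shows "pd (B Y)"
proof -
  obtain r where r: "rr A B Y = ereal r" using assms(3) rr_nonneg[of A B Y] by (cases "rr A B Y") auto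
  then have "0 \<le> r" using rr_nonneg[of A B Y] by simp
  then have psd: "psd (r *\<^sub>R B Y - A Y)"
    using r rr_le_ereal_iff[where A = A and B = B, OF positive_map_psd[OF assms(1,2)] \<open>0 \<le> r\<close>] by simp
  then have "r \<noteq> 0" using not_psd_uminus_pd[OF assms(4)] by auto
  have "pd (r *\<^sub>R B Y)" using pd_add_psd[OF assms(4) psd] by simp
  from pd_scaleR[OF this, of "inverse r"] show ?thesis using \<open>0 \<le> r\<close> \<open>r \<noteq> 0\<close> by simp
qed

text \<open>Moving a weakly optimal \<open>Y\<close> into the interior as \<open>Y + \<delta> I\<close>: the slack \<open>\<epsilon> B(Y) \<succ> 0\<close>
  absorbs the error \<open>\<delta> ((\<rho> + \<epsilon>) B(I) - A(I))\<close> for small \<open>\<delta>\<close>.\<close>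

lemma rho_le_rhohat_of_weakly_optimal:
  assumes A: "positive_map A" and B: "positive_map B"
    and Y: "weakly_optimal A B Y" and BY: "pd (B Y)"
  shows "rho A B \<le> rhohat A B"
proof (cases "rhohat A B")
  case (real \<rho>)
  have "psd Y" using Y unfolding weakly_optimal_def by simp
  have "0 \<le> \<rho>" using rhohat_nonneg[of A B] real by simp
  have opt: "psd (\<rho> *\<^sub>R B Y - A Y)"
    using Y real rr_le_ereal_iff[where A = A and B = B, OF positive_map_psd[OF B \<open>psd Y\<close>] \<open>0 \<le> \<rho>\<close>]
    unfolding weakly_optimal_def by simp
  show ?thesis unfolding real
  proof (rule ereal_le_epsilon2)
    fix e :: real assume "0 < e"
    let ?N = "(\<rho> + e) *\<^sub>R B (mat 1) - A (mat 1)"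
    have "hermitian ?N"
      by (intro hermitian_diff hermitian_scaleR psd_hermitian positive_map_psd[OF A]
          positive_map_psd[OF B] psd_mat1)
    then obtain \<delta> where "0 < \<delta>" "psd (e *\<^sub>R B Y + \<delta> *\<^sub>R ?N)"
      using pd_add_scaleR_psd[OF pd_scaleR[OF BY \<open>0 < e\<close>]] by blast
    define X where "X = \<delta> *\<^sub>R mat 1 + Y"
    have "pd X" unfolding X_def using \<open>psd Y\<close> \<open>0 < \<delta>\<close> by (intro pd_add_psd pd_scaleR pd_mat1)
    have "(\<rho> + e) *\<^sub>R B X - A X = (\<rho> *\<^sub>R B Y - A Y) + (e *\<^sub>R B Y + \<delta> *\<^sub>R ?N)"
      unfolding X_def using positive_map_linear[OF A] positive_map_linear[OF B]
      by (simp add: linear_add linear_scale algebra_simps)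
    then have "psd ((\<rho> + e) *\<^sub>R B X - A X)"
      using psd_add[OF opt \<open>psd (e *\<^sub>R B Y + \<delta> *\<^sub>R ?N)\<close>] by simp
    then have "rr A B X \<le> ereal (\<rho> + e)" using \<open>0 \<le> \<rho>\<close> \<open>0 < e\<close> by (intro rr_le_ereal) auto
    then show "rho A B \<le> ereal \<rho> + ereal e" using order_trans[OF rho_le_rr[OF \<open>pd X\<close>]] by simp
  qed
qed (use rhohat_nonneg[of A B] in simp_all)

lemma rho_eq_rhohat_of_weakly_optimal:
  assumes A: "positive_map A" and B: "positive_map B" and Y: "weakly_optimal A B Y"
    and pd: "pd (B Y) \<or> pd (A Y)" and fin: "rho A B < \<infinity>"
  shows "rho A B = rhohat A B"
proof -
  have "rhohat A B < \<infinity>" using rhohat_le_rho fin by (rule le_less_trans)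
  then have "rr A B Y < \<infinity>" using Y unfolding weakly_optimal_def by simp
  then have "pd (B Y)" using Y pd rr_finite_pd_imp_pd[OF B] unfolding weakly_optimal_def by blast
  then show ?thesis
    using rho_le_rhohat_of_weakly_optimal[OF A B Y] rhohat_le_rho[of A B] by simp
qed

lemma rho_eq_rhohat_of_cp_gt:
  fixes A B :: "complex^'n^'n \<Rightarrow> complex^'m^'m"
  assumes A: "positive_map A" and B: "positive_map B" and fin: "rho A B < \<infinity>"
    and gt: "cp_gt A (\<lambda>_. 0) \<or> cp_gt B (\<lambda>_. 0)"
  shows "rho A B = rhohat A B"
proof -
  obtain Y where "density Y" "weakly_optimal A B Y"
    using weakly_optimal_density_exists[OF A B] by blast
  moreover have "pd (B Y) \<or> pd (A Y)" using gt \<open>density Y\<close> unfolding cp_gt_def by auto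
  ultimately show ?thesis using rho_eq_rhohat_of_weakly_optimal[OF A B _ _ fin] by blast
qed

lemma rho_finite_of_cp_gt:
  fixes A B :: "complex^'n^'n \<Rightarrow> complex^'m^'m"
  assumes A: "positive_map A" and B: "positive_map B" and gt: "cp_gt B (\<lambda>_. 0)"
  shows "rho A B < \<infinity>"
proof -
  have "pd (B (mat 1))"
    by (rule cp_gt_zero_pd[OF gt positive_map_linear[OF B] psd_mat1 pd_nonzero[OF pd_mat1]])
  moreover have "hermitian (- A (mat 1))"
    by (intro hermitian_uminus psd_hermitian positive_map_psd[OF A] psd_mat1)
  ultimately obtain \<epsilon> where "0 < \<epsilon>" "psd (B (mat 1) + \<epsilon> *\<^sub>R - A (mat 1))"
    using pd_add_scaleR_psd by blast
  moreover have "inverse \<epsilon> *\<^sub>R (B (mat 1) + \<epsilon> *\<^sub>R - A (mat 1)) = inverse \<epsilon> *\<^sub>R B (mat 1) - A (mat 1)"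
    using \<open>0 < \<epsilon>\<close> by (simp add: scaleR_diff_right)
  ultimately have "psd (inverse \<epsilon> *\<^sub>R B (mat 1) - A (mat 1))"
    using psd_scaleR[of _ "inverse \<epsilon>"] by fastforce
  then have "rr A B (mat 1) \<le> ereal (inverse \<epsilon>)" using \<open>0 < \<epsilon>\<close> by (intro rr_le_ereal) simp_all
  then have "rho A B \<le> ereal (inverse \<epsilon>)" using rho_le_rr[OF pd_mat1] by (rule order_trans[rotated])
  then show ?thesis by (rule le_less_trans) simp
qed

section \<open>Perturbations of the numerator and the denominator\<close>

lemma rho_add_denominator_le_rhohat:
  fixes A B D :: "complex^'n^'n \<Rightarrow> complex^'m^'m"
  assumes A: "positive_map A" and B: "positive_map B"
    and D: "positive_map D" and gt: "cp_gt D (\<lambda>_. 0)"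
  shows "rho A (\<lambda>X. B X + D X) \<le> rhohat A B"
proof -
  have BD: "positive_map (\<lambda>X. B X + D X)" by (rule positive_map_add[OF B D])
  have gt': "cp_gt (\<lambda>X. B X + D X) (\<lambda>_. 0)" by (rule cp_gt_add_left[OF B gt])
  have "rho A (\<lambda>X. B X + D X) = rhohat A (\<lambda>X. B X + D X)"
    using rho_eq_rhohat_of_cp_gt[OF A BD rho_finite_of_cp_gt[OF A BD gt']] gt' by blast
  also have "\<dots> \<le> rhohat A B"
    using positive_map_linear A B BD
    by (intro rho_rhohat_mono(2) cp_ge_refl cp_ge_add_right[OF D]) auto
  finally show ?thesis .
qed

lemma tendsto_rho_add_denominator:
  fixes A B :: "complex^'n^'n \<Rightarrow> complex^'m^'m" and D :: "nat \<Rightarrow> complex^'n^'n \<Rightarrow> complex^'m^'m"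
  assumes A: "positive_map A" and B: "positive_map B"
    and D: "\<And>l. positive_map (D l)" and gt: "\<And>l. cp_gt (D l) (\<lambda>_. 0)"
    and D0: "(\<lambda>l. Blinfun (D l)) \<longlonglongrightarrow> 0"
  shows "(\<lambda>l. rho A (\<lambda>X. B X + D l X)) \<longlonglongrightarrow> rhohat A B"
proof (rule order_tendstoI)
  fix a assume "rhohat A B < a"
  then show "\<forall>\<^sub>F l in sequentially. rho A (\<lambda>X. B X + D l X) < a"
    using rho_add_denominator_le_rhohat[OF A B D gt] by (intro always_eventually allI) (rule le_less_trans)
next
  fix a assume a: "a < rhohat A B"
  show "\<forall>\<^sub>F l in sequentially. a < rho A (\<lambda>X. B X + D l X)"
  proof (rule ccontr)
    assume "\<not> ?thesis"
    from not_eventually_sequentiallyD[OF this]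
    obtain \<sigma> :: "nat \<Rightarrow> nat" where "strict_mono \<sigma>" "\<And>k. \<not> a < rho A (\<lambda>X. B X + D (\<sigma> k) X)"
      by blast
    then have \<sigma>: "strict_mono \<sigma>" "\<And>k. rho A (\<lambda>X. B X + D (\<sigma> k) X) \<le> a"
      by (simp_all add: not_less)
    have "a \<noteq> \<infinity>" using a by auto
    moreover have "a \<noteq> -\<infinity>" using order_trans[OF rho_nonneg \<sigma>(2)[of 0]] by auto
    ultimately obtain c where c: "a = ereal c" by (cases a) auto
    have le: "rhohat A (\<lambda>X. B X + D (\<sigma> k) X) \<le> ereal c" for k
      using order_trans[OF rhohat_le_rho \<sigma>(2)] c by simp
    have "(\<lambda>k. Blinfun (D (\<sigma> k))) \<longlonglongrightarrow> 0"
      using LIMSEQ_subseq_LIMSEQ[OF D0 \<sigma>(1)] by (simp add: o_def)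
    then obtain Y where "density Y" "rr A B Y \<le> ereal c"
      using density_rr_le_of_perturbed[where E = "\<lambda>k. D (\<sigma> k)", OF A B D _ le] by blast
    then show False using a c rhohat_le_rr_density[of Y A B] by simp
  qed
qed

lemma eventually_rho_add_numerator_le:
  fixes A B :: "complex^'n^'n \<Rightarrow> complex^'m^'m" and D :: "nat \<Rightarrow> complex^'n^'n \<Rightarrow> complex^'m^'m"
  assumes B: "positive_map B" and D: "\<And>l. positive_map (D l)"
    and D0: "(\<lambda>l. Blinfun (D l)) \<longlonglongrightarrow> 0" and BI: "pd (B (mat 1))"
    and less: "rho A B < ereal a"
  shows "\<forall>\<^sub>F l in sequentially. rho (\<lambda>X. A X + D l X) B \<le> ereal a"
proof -
  obtain X where X: "pd X" "rr A B X < ereal a" using less by (rule rho_lessE)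
  obtain t where t: "rr A B X = ereal t" using X(2) rr_nonneg[of A B X] by (cases "rr A B X") auto
  have BX: "pd (B X)" by (rule pd_apply_of_pd_mat1[OF B BI X(1)])
  have "0 \<le> t" "t < a" using t X(2) rr_nonneg[of A B X] by simp_all
  then have opt: "psd (t *\<^sub>R B X - A X)"
    using t rr_le_ereal_iff[where A = A and B = B, OF pd_imp_psd[OF BX] \<open>0 \<le> t\<close>] by simp
  have "pd ((a - t) *\<^sub>R B X)" using BX \<open>t < a\<close> by (simp add: pd_scaleR)
  then obtain e where e: "0 < e" "\<And>M. hermitian M \<Longrightarrow> norm M \<le> e \<Longrightarrow> psd ((a - t) *\<^sub>R B X + M)"
    using pd_add_small_psd by blast
  have "(\<lambda>l. D l X) \<longlonglongrightarrow> 0"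
    by (rule tendsto_apply_bounded_zero[where K = "norm X", OF positive_map_bounded_linear[OF D] D0])
      simp
  then have "(\<lambda>l. norm (D l X)) \<longlonglongrightarrow> 0" by (rule tendsto_norm_zero)
  then have "\<forall>\<^sub>F l in sequentially. norm (D l X) < e" using e(1) by (rule order_tendstoD(2))
  then show ?thesis
  proof (rule eventually_mono)
    fix l assume "norm (D l X) < e"
    have herm: "hermitian (- D l X)"
      by (rule hermitian_uminus[OF psd_hermitian[OF positive_map_psd[OF D pd_imp_psd[OF X(1)]]]])
    have "psd ((a - t) *\<^sub>R B X + - D l X)" using e(2)[OF herm] \<open>norm (D l X) < e\<close> by simp
    then have "psd ((t *\<^sub>R B X - A X) + ((a - t) *\<^sub>R B X + - D l X))" by (rule psd_add[OF opt])
    then have "psd (a *\<^sub>R B X - (A X + D l X))" by (simp add: algebra_simps)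
    then have "rr (\<lambda>X. A X + D l X) B X \<le> ereal a" using \<open>0 \<le> t\<close> \<open>t < a\<close> by (intro rr_le_ereal) auto
    then show "rho (\<lambda>X. A X + D l X) B \<le> ereal a"
      using rho_le_rr[OF X(1)] by (rule order_trans[rotated])
  qed
qed

lemma tendsto_rho_add_numerator:
  fixes A B :: "complex^'n^'n \<Rightarrow> complex^'m^'m" and D :: "nat \<Rightarrow> complex^'n^'n \<Rightarrow> complex^'m^'m"
  assumes A: "positive_map A" and B: "positive_map B" and D: "\<And>l. positive_map (D l)"
    and D0: "(\<lambda>l. Blinfun (D l)) \<longlonglongrightarrow> 0" and BI: "pd (B (mat 1))"
  shows "(\<lambda>l. rho (\<lambda>X. A X + D l X) B) \<longlonglongrightarrow> rho A B"
proof (rule order_tendstoI)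
  fix a assume "a < rho A B"
  moreover have "rho A B \<le> rho (\<lambda>X. A X + D l X) B" for l
    using positive_map_linear A B positive_map_add[OF A D]
    by (intro rho_rhohat_mono(1) cp_ge_refl cp_ge_add_right[OF D]) auto
  ultimately show "\<forall>\<^sub>F l in sequentially. a < rho (\<lambda>X. A X + D l X) B"
    by (intro always_eventually allI) (rule less_le_trans)
next
  fix a assume "rho A B < a"
  then obtain a' where a': "rho A B < ereal a'" "ereal a' < a" using ereal_dense2 by blast
  from eventually_rho_add_numerator_le[OF B D D0 BI a'(1)]
  show "\<forall>\<^sub>F l in sequentially. rho (\<lambda>X. A X + D l X) B < a"
    by (rule eventually_mono) (rule le_less_trans[OF _ a'(2)])
qed

theorem lemma7p3:
  fixes A B :: "complex^'n^'n \<Rightarrow> complex^'m^'m"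
  assumes "is_CP A" and "is_CP B"
  shows "rhohat A B \<le> rho A B
    \<and> (\<forall>A1 B1. is_CP A1 \<and> is_CP B1 \<and> cp_ge A A1 \<and> cp_ge B1 B \<longrightarrow>
           rho A1 B1 \<le> rho A B \<and> rhohat A1 B1 \<le> rhohat A B)
    \<and> (\<exists>Y. density Y \<and> weakly_optimal A B Y)
    \<and> ((\<exists>Y. weakly_optimal A B Y \<and> (pd (B Y) \<or> pd (A Y))) \<and> rho A B < \<infinity> \<longrightarrow>
           rho A B = rhohat A B)
    \<and> (rho A B < \<infinity> \<and> (cp_gt A (\<lambda>_. 0) \<or> cp_gt B (\<lambda>_. 0)) \<longrightarrow> rho A B = rhohat A B)
    \<and> (\<forall>D :: nat \<Rightarrow> complex^'n^'n \<Rightarrow> complex^'m^'m.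
           (\<forall>l. is_CP (D l) \<and> cp_gt (D l) (\<lambda>_. 0)) \<and> (\<lambda>l. Blinfun (D l)) \<longlonglongrightarrow> 0 \<longrightarrow>
           (\<lambda>l. rho A (\<lambda>X. B X + D l X)) \<longlonglongrightarrow> rhohat A B)
    \<and> (\<forall>D :: nat \<Rightarrow> complex^'n^'n \<Rightarrow> complex^'m^'m.
           (\<forall>l. is_CP (D l) \<and> cp_gt (D l) (\<lambda>_. 0)) \<and> (\<lambda>l. Blinfun (D l)) \<longlonglongrightarrow> 0
           \<and> pd (B (mat 1)) \<longrightarrow>
           (\<lambda>l. rho (\<lambda>X. A X + D l X) B) \<longlonglongrightarrow> rho A B)"
proof -
  have A: "positive_map A" and B: "positive_map B" using assms by (simp_all add: is_CP_positive_map)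
  have lin: "linear C" if "is_CP C" for C :: "complex^'n^'n \<Rightarrow> complex^'m^'m"
    by (rule positive_map_linear[OF is_CP_positive_map[OF that]])
  have mono: "rho A1 B1 \<le> rho A B \<and> rhohat A1 B1 \<le> rhohat A B"
    if "is_CP A1 \<and> is_CP B1 \<and> cp_ge A A1 \<and> cp_ge B1 B" for A1 B1
    using that rho_rhohat_mono[OF lin[OF assms(1)] lin lin[OF assms(2)] lin] by blast
  have denominator: "(\<lambda>l. rho A (\<lambda>X. B X + D l X)) \<longlonglongrightarrow> rhohat A B"
    if "(\<forall>l. is_CP (D l) \<and> cp_gt (D l) (\<lambda>_. 0)) \<and> (\<lambda>l. Blinfun (D l)) \<longlonglongrightarrow> 0"
    for D :: "nat \<Rightarrow> complex^'n^'n \<Rightarrow> complex^'m^'m"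
    using that by (auto intro!: tendsto_rho_add_denominator[OF A B] is_CP_positive_map)
  have numerator: "(\<lambda>l. rho (\<lambda>X. A X + D l X) B) \<longlonglongrightarrow> rho A B"
    if "(\<forall>l. is_CP (D l) \<and> cp_gt (D l) (\<lambda>_. 0)) \<and> (\<lambda>l. Blinfun (D l)) \<longlonglongrightarrow> 0 \<and> pd (B (mat 1))"
    for D :: "nat \<Rightarrow> complex^'n^'n \<Rightarrow> complex^'m^'m"
    using that by (auto intro!: tendsto_rho_add_numerator[OF A B] is_CP_positive_map)
  show ?thesis
    using rhohat_le_rho[of A B] mono weakly_optimal_density_exists[OF A B]
      rho_eq_rhohat_of_weakly_optimal[OF A B] rho_eq_rhohat_of_cp_gt[OF A B] denominator numerator
    by blast
qed

end
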